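(* Let $G=(V,E)$ and $H=(U,F)$ be finite simple graphs, each with $n$ vertices. Then the tree generation stage of the uniqueness tree algorithm (described in the context), which constructs the uniqueness tree $T(v)$ for every vertex $v$ of $G$ and of $H$, runs in time $O(n^6)$ in the worst case.
   Context: A simple graph is a finite, unweighted, undirected graph with no loops or multiple edges; the size $n$ of a graph is its number of vertices. Tree generation stage: for each of the two graphs and each vertex $v$ of it, build a rooted tree $T(v)$ whose nodes are labelled by vertices of the graph, level by level. Level $0$ consists of the root, labelled $v$. Given the current level, a node of that level is called unique if its label occurs exactly once among the labels of the nodes of that level. Each non-unique node becomes a leaf (no children); each unique node labelled $u$ receives one child for each neighbour $w$ of $u$ in the graph, labelled $w$; these children form the next level. This is repeated while some node on the current level is unique and the height of $T(v)$ is less than $n$. *)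

theory Defs
  imports Main "HOL-Library.Multiset"
begin

definition simple_graph :: "nat set \<Rightarrow> (nat \<Rightarrow> nat \<Rightarrow> bool) \<Rightarrow> bool" where
  "simple_graph V E \<longleftrightarrow> finite V \<and>
     (\<forall>u w. E u w \<longrightarrow> u \<in> V \<and> w \<in> V) \<and>
     (\<forall>u w. E u w \<longrightarrow> E w u) \<and> (\<forall>u. \<not> E u u)"

definition nbrs :: "(nat \<Rightarrow> nat \<Rightarrow> bool) \<Rightarrow> nat \<Rightarrow> nat set" where
  "nbrs E u = {w. E u w}"

text \<open>A level of the tree T(v) is represented by the multiset of labels of its nodes.
  A node labelled u is unique iff u occurs exactly once in the level.\<close>
definition unique_label :: "nat multiset \<Rightarrow> nat \<Rightarrow> bool" where
  "unique_label L u \<longleftrightarrow> count L u = 1"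

text \<open>Next level: each unique node labelled u gets one child per neighbour of u;
  non-unique nodes become leaves.\<close>
definition next_level :: "(nat \<Rightarrow> nat \<Rightarrow> bool) \<Rightarrow> nat multiset \<Rightarrow> nat multiset" where
  "next_level E L = (\<Sum>u\<in>{u. unique_label L u}. mset_set (nbrs E u))"

text \<open>Cost model (elementary operations) of the tree generation stage, starting at a level L
  of height h in a graph of size n.  Processing a level costs (size L)^2 for determining which
  nodes are unique (pairwise label comparison), plus one unit per created child.\<close>
function gen_cost :: "(nat \<Rightarrow> nat \<Rightarrow> bool) \<Rightarrow> nat \<Rightarrow> nat \<Rightarrow> nat multiset \<Rightarrow> nat" where
  "gen_cost E n h L =
     size L ^ 2 +
     (if h < n \<and> (\<exists>u. unique_label L u)
      then size (next_level E L) + gen_cost E n (Suc h) (next_level E L)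
      else 0)"
  by pat_completeness auto
termination
  by (relation "measure (\<lambda>(E, n, h, L). n - h)") auto

definition tree_generation_cost :: "nat set \<Rightarrow> (nat \<Rightarrow> nat \<Rightarrow> bool) \<Rightarrow> nat" where
  "tree_generation_cost V E = (\<Sum>v\<in>V. gen_cost E (card V) 0 {#v#})"

end

theory Submission
  imports Defs
begin

text \<open>Unique nodes of a level carry pairwise distinct labels, so a level is generated by at most
  \<open>n\<close> nodes with at most \<open>n\<close> children each and has at most \<open>n\<^sup>2\<close> nodes. Testing uniqueness on a
  level therefore costs \<open>O(n\<^sup>4)\<close>, a tree has at most \<open>n + 1\<close> levels, and there are \<open>2n\<close> trees:
  altogether \<open>O(n\<^sup>6)\<close>.\<close>

lemma finite_unique_labels: "finite {u. unique_label L u}"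
  by (rule finite_subset[of _ "set_mset L"]) (auto simp: unique_label_def intro: count_inI)

lemma size_next_level_le:
  assumes "simple_graph V E"
  shows "size (next_level E L) \<le> card V ^ 2"
proof -
  let ?S = "{u. unique_label L u}"
  have fin: "finite V" and nbrs_sub: "nbrs E u \<subseteq> V" for u
    using assms by (auto simp: simple_graph_def nbrs_def)
  have nbrs_outside: "u \<notin> V \<Longrightarrow> nbrs E u = {}" for u
    using assms by (auto simp: simple_graph_def nbrs_def)
  have "size (next_level E L) = (\<Sum>u\<in>?S. card (nbrs E u))"
    by (simp add: next_level_def)
  also have "\<dots> = (\<Sum>u\<in>?S \<inter> V. card (nbrs E u))"
    by (rule sum.mono_neutral_right) (use finite_unique_labels nbrs_outside in auto)
  also have "\<dots> \<le> (\<Sum>u\<in>V. card (nbrs E u))"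
    by (rule sum_mono2) (use fin in auto)
  also have "\<dots> \<le> (\<Sum>u\<in>V. card V)"
    by (rule sum_mono) (rule card_mono[OF fin nbrs_sub])
  finally show ?thesis
    by (simp add: power2_eq_square)
qed

declare gen_cost.simps [simp del]

lemma gen_cost_le:
  assumes "\<And>L'. size (next_level E L') \<le> m" and "size L \<le> m"
  shows "gen_cost E n h L \<le> (n - h + 1) * (m\<^sup>2 + m)"
  using assms
proof (induction E n h L rule: gen_cost.induct)
  case (1 E n h L)
  have sq: "size L ^ 2 \<le> m\<^sup>2"
    using "1.prems"(2) by (simp add: power_mono)
  show ?case
  proof (cases "h < n \<and> (\<exists>u. unique_label L u)")
    case True
    have "n - h + 1 = (n - Suc h + 1) + 1"
      using True by arith
    have "gen_cost E n h L =
        size L ^ 2 + (size (next_level E L) + gen_cost E n (Suc h) (next_level E L))"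
      using True by (simp add: gen_cost.simps[of E n h L])
    also have "\<dots> \<le> m\<^sup>2 + (m + (n - Suc h + 1) * (m\<^sup>2 + m))"
      using sq "1.prems" "1.IH"[OF True] by (intro add_mono) auto
    also have "\<dots> = (n - h + 1) * (m\<^sup>2 + m)"
      using \<open>n - h + 1 = (n - Suc h + 1) + 1\<close> by (simp add: algebra_simps)
    finally show ?thesis .
  next
    case False
    have "gen_cost E n h L = size L ^ 2"
      unfolding gen_cost.simps[of E n h L] if_not_P[OF False] by simp
    also have "\<dots> \<le> m\<^sup>2 + m"
      using sq by linarith
    also have "\<dots> \<le> (n - h + 1) * (m\<^sup>2 + m)"
      by simp
    finally show ?thesis .
  qed
qed

lemma tree_generation_cost_le:
  assumes "simple_graph V E"
  shows "tree_generation_cost V E \<le> 4 * card V ^ 6"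
proof (cases "V = {}")
  case True
  then show ?thesis by (simp add: tree_generation_cost_def)
next
  case False
  define n where "n = card V"
  have "n \<ge> 1"
    using False assms by (simp add: n_def simple_graph_def Suc_le_eq card_gt_0_iff)
  then have "n\<^sup>2 \<le> n ^ 4" and root: "size {#v#} \<le> n\<^sup>2" for v :: nat
    by (simp_all add: power_increasing Suc_le_eq)
  have per_tree: "gen_cost E n 0 {#v#} \<le> 4 * n ^ 5" for v
  proof -
    have "gen_cost E n 0 {#v#} \<le> (n - 0 + 1) * ((n\<^sup>2)\<^sup>2 + n\<^sup>2)"
      using gen_cost_le[of E "n\<^sup>2" "{#v#}" n 0] size_next_level_le[OF assms] root
      by (simp add: n_def)
    also have "\<dots> = (n + 1) * (n ^ 4 + n\<^sup>2)"
      by (simp flip: power_mult)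
    also have "\<dots> \<le> (2 * n) * (2 * n ^ 4)"
      using \<open>n \<ge> 1\<close> \<open>n\<^sup>2 \<le> n ^ 4\<close> by (intro mult_le_mono) auto
    also have "\<dots> = 4 * n ^ 5"
      by algebra
    finally show ?thesis .
  qed
  have "tree_generation_cost V E \<le> (\<Sum>v\<in>V. 4 * n ^ 5)"
    unfolding tree_generation_cost_def n_def using per_tree by (intro sum_mono) (simp add: n_def)
  also have "\<dots> = n * (4 * n ^ 5)"
    by (simp add: n_def)
  also have "\<dots> = 4 * n ^ 6"
    by algebra
  finally show ?thesis
    by (simp add: n_def)
qed

theorem lemma1:
  shows "\<exists>C::nat. \<forall>(n::nat) V E U F.
           simple_graph V E \<and> simple_graph U F \<and> card V = n \<and> card U = n \<longrightarrow>
           tree_generation_cost V E + tree_generation_cost U F \<le> C * n ^ 6"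
proof (intro exI[of _ 8] allI impI)
  fix n V E U F
  assume "simple_graph V E \<and> simple_graph U F \<and> card V = n \<and> card U = n"
  then show "tree_generation_cost V E + tree_generation_cost U F \<le> 8 * n ^ 6"
    using tree_generation_cost_le[of V E] tree_generation_cost_le[of U F] by simp
qed

end
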